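(* Let $A\in\mathbb{C}^{m\times n}$ have rank $r$ and $B\in\mathbb{C}^{m\times n}$ have rank $s$, with singular value decompositions $$A=U\begin{pmatrix}\Sigma_{1}&0\\0&0\end{pmatrix}V^{\ast}=U_{1}\Sigma_{1}V_{1}^{\ast},\qquad B=\widetilde{U}\begin{pmatrix}\widetilde{\Sigma}_{1}&0\\0&0\end{pmatrix}\widetilde{V}^{\ast}=\widetilde{U}_{1}\widetilde{\Sigma}_{1}\widetilde{V}_{1}^{\ast},$$ where $U=(U_{1},U_{2})$ and $\widetilde{U}=(\widetilde{U}_{1},\widetilde{U}_{2})$ are $m\times m$ unitary, $V=(V_{1},V_{2})$ and $\widetilde{V}=(\widetilde{V}_{1},\widetilde{V}_{2})$ are $n\times n$ unitary, $U_{1}\in\mathbb{C}^{m\times r}$, $V_{1}\in\mathbb{C}^{n\times r}$, $\widetilde{U}_{1}\in\mathbb{C}^{m\times s}$, $\widetilde{V}_{1}\in\mathbb{C}^{n\times s}$, $\Sigma_{1}=\operatorname{diag}(\sigma_{1},\ldots,\sigma_{r})$ with $\sigma_{1}\geq\cdots\geq\sigma_{r}>0$, and $\widetilde{\Sigma}_{1}=\operatorname{diag}(\widetilde{\sigma}_{1},\ldots,\widetilde{\sigma}_{s})$ with $\widetilde{\sigma}_{1}\geq\cdots\geq\widetilde{\sigma}_{s}>0$. Let $E=B-A$. Then $$\|B^{\dagger}-A^{\dagger}\|_{F}^{2}=\|\widetilde{\Sigma}_{1}^{-1}\widetilde{U}_{1}^{\ast}U_{2}\|_{F}^{2}+\|\widetilde{V}_{2}^{\ast}V_{1}\Sigma_{1}^{-1}\|_{F}^{2}+\|B^{\dagger}EA^{\dagger}\|_{F}^{2},$$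 $$\|B^{\dagger}-A^{\dagger}\|_{F}^{2}=\|\widetilde{U}_{2}^{\ast}U_{1}\Sigma_{1}^{-1}\|_{F}^{2}+\|\widetilde{\Sigma}_{1}^{-1}\widetilde{V}_{1}^{\ast}V_{2}\|_{F}^{2}+\|A^{\dagger}EB^{\dagger}\|_{F}^{2}.$$
   Context: $M^{\dagger}$ denotes the Moore–Penrose inverse of $M$, $M^{\ast}$ the conjugate transpose, and $\|\cdot\|_{F}$ the Frobenius norm. *)

theory Defs
  imports "Jordan_Normal_Form.Schur_Decomposition" "Jordan_Normal_Form.DL_Rank"
begin

definition unitary_mat :: "complex mat \<Rightarrow> bool" where
  "unitary_mat U \<longleftrightarrow> U \<in> carrier_mat (dim_row U) (dim_row U) \<and>
     mat_adjoint U * U = 1\<^sub>m (dim_row U) \<and> U * mat_adjoint U = 1\<^sub>m (dim_row U)"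

definition col_block :: "'a mat \<Rightarrow> nat \<Rightarrow> nat \<Rightarrow> 'a mat" where
  "col_block M k l = mat (dim_row M) l (\<lambda>(i,j). M $$ (i, k + j))"

definition mp_inverse :: "complex mat \<Rightarrow> complex mat" where
  "mp_inverse A = (THE X. X \<in> carrier_mat (dim_col A) (dim_row A) \<and>
      A * X * A = A \<and> X * A * X = X \<and>
      mat_adjoint (A * X) = A * X \<and> mat_adjoint (X * A) = X * A)"

definition mat_inv :: "complex mat \<Rightarrow> complex mat" where
  "mat_inv M = (THE X. X \<in> carrier_mat (dim_row M) (dim_row M) \<and>
      M * X = 1\<^sub>m (dim_row M) \<and> X * M = 1\<^sub>m (dim_row M))"

definition frob_norm :: "complex mat \<Rightarrow> real" where
  "frob_norm M = sqrt (\<Sum>i<dim_row M. \<Sum>j<dim_col M. (cmod (M $$ (i,j)))\<^sup>2)"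

end

theory Submission
  imports Defs
begin

text \<open>Write X and Y for the Moore-Penrose inverses of A and B. For arbitrary matrices one has
  Y - X = Y (I - A X) - (I - Y B) X - Y (B - A) X.
By the Penrose equations, I - A X and I - Y B are Hermitian and satisfy X (I - A X) = 0 and
(I - Y B) Y = 0; hence the three terms are pairwise orthogonal for the Frobenius inner product
and Pythagoras gives the squared norm as a sum of three squares. For compact SVDs,
I - A X = U2 U2* and I - Y B = Vt2 Vt2*, and unitary invariance of the Frobenius norm turns
the first two squares into the stated ones. Exchanging A and B gives the second identity.\<close>

section \<open>Matrix products and the conjugate transpose\<close>

lemma mult_mat_assoc:
  "dim_col A = dim_row B \<Longrightarrow> dim_col B = dim_row C \<Longrightarrow>
   A * B * C = A * (B * (C :: 'a :: semiring_0 mat))"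
  by (metis assoc_mult_mat carrier_mat_triv)

lemma mult_mat_left_inverse_cancel:
  assumes AB: "A * B = 1\<^sub>m k" and "dim_col A = dim_row B" and Z: "dim_row Z = k"
  shows "A * (B * Z) = (Z :: 'a :: semiring_1 mat)"
proof -
  have "dim_col B = k"
    using arg_cong[OF AB, of dim_col] by simp
  then have "A * (B * Z) = (A * B) * Z"
    using assms by (intro mult_mat_assoc[symmetric]) simp_all
  also have "\<dots> = Z"
    using AB Z by simp
  finally show ?thesis .
qed

lemma index_mult_mat_sum:
  "A \<in> carrier_mat a k \<Longrightarrow> B \<in> carrier_mat k b \<Longrightarrow> i < a \<Longrightarrow> j < b \<Longrightarrow>
   (A * B) $$ (i, j) = (\<Sum>l<k. A $$ (i, l) * B $$ (l, j))"
  unfolding carrier_mat_def by (auto simp: scalar_prod_def atLeast0LessThan intro!: sum.cong)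

lemma sum_lessThan_add:
  "(\<Sum>p<(r :: nat) + d. f p) = (\<Sum>p<r. f p) + (\<Sum>p<d. f (r + p) :: 'a :: comm_monoid_add)"
  by (induct d) (simp_all add: add.assoc)

lemma dim_row_mat_adjoint[simp]: "dim_row (mat_adjoint M) = dim_col M"
  by (simp add: mat_adjoint_def)

lemma dim_col_mat_adjoint[simp]: "dim_col (mat_adjoint M) = dim_row M"
  by (simp add: mat_adjoint_def)

lemma mat_adjoint_carrier_iff[simp]: "mat_adjoint M \<in> carrier_mat a b \<longleftrightarrow> M \<in> carrier_mat b a"
  unfolding carrier_mat_def by auto

lemma index_mat_adjoint[simp]:
  "i < dim_col M \<Longrightarrow> j < dim_row M \<Longrightarrow> mat_adjoint M $$ (i, j) = cnj (M $$ (j, i))"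
  by (simp add: mat_adjoint_def mat_of_rows_index)

lemma mat_adjoint_adjoint[simp]: "mat_adjoint (mat_adjoint M) = (M :: complex mat)"
  by (rule eq_matI) auto

lemma mat_adjoint_mult:
  assumes A: "A \<in> carrier_mat a k" and B: "B \<in> carrier_mat k b"
  shows "mat_adjoint (A * B) = mat_adjoint B * mat_adjoint (A :: complex mat)"
proof (rule eq_matI)
  fix i j
  assume "i < dim_row (mat_adjoint B * mat_adjoint A)" "j < dim_col (mat_adjoint B * mat_adjoint A)"
  then have i: "i < b" and j: "j < a" using A B by auto
  have "mat_adjoint (A * B) $$ (i, j) = cnj ((A * B) $$ (j, i))"
    using A B i j by simp
  also have "\<dots> = (\<Sum>l<k. cnj (A $$ (j, l)) * cnj (B $$ (l, i)))"
    by (simp add: index_mult_mat_sum[OF A B j i] del: index_mult_mat(1))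
  also have "\<dots> = (\<Sum>l<k. mat_adjoint B $$ (i, l) * mat_adjoint A $$ (l, j))"
    using A B i j by (intro sum.cong) (auto simp: mult.commute)
  also have "\<dots> = (mat_adjoint B * mat_adjoint A) $$ (i, j)"
    by (rule index_mult_mat_sum[symmetric]) (use A B i j in auto)
  finally show "mat_adjoint (A * B) $$ (i, j) = (mat_adjoint B * mat_adjoint A) $$ (i, j)" .
qed (use A B in auto)

lemma mat_adjoint_minus:
  "A \<in> carrier_mat a b \<Longrightarrow> B \<in> carrier_mat a b \<Longrightarrow>
   mat_adjoint (A - B) = mat_adjoint A - mat_adjoint (B :: complex mat)"
  by (rule eq_matI) auto

lemma mat_adjoint_one[simp]: "mat_adjoint (1\<^sub>m n :: complex mat) = 1\<^sub>m n"
  by (rule eq_matI) auto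

lemma mat_adjoint_mat_diag_of_real[simp]:
  "mat_adjoint (mat_diag n (\<lambda>i. complex_of_real (d i))) = mat_diag n (\<lambda>i. complex_of_real (d i))"
  by (rule eq_matI) (auto simp: mat_diag_def)

section \<open>The Frobenius inner product\<close>

definition frob_inner :: "complex mat \<Rightarrow> complex mat \<Rightarrow> complex" where
  "frob_inner Y Z = (\<Sum>i<dim_row Y. \<Sum>j<dim_col Y. Y $$ (i, j) * cnj (Z $$ (i, j)))"

lemma frob_norm_sq: "(frob_norm M)\<^sup>2 = Re (frob_inner M M)"
proof -
  have "0 \<le> (\<Sum>i<dim_row M. \<Sum>j<dim_col M. (cmod (M $$ (i, j)))\<^sup>2)"
    by (intro sum_nonneg) simp
  then have "(frob_norm M)\<^sup>2 = (\<Sum>i<dim_row M. \<Sum>j<dim_col M. (cmod (M $$ (i, j)))\<^sup>2)"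
    unfolding frob_norm_def by simp
  also have "\<dots> = Re (frob_inner M M)"
    unfolding frob_inner_def Re_sum
    by (intro sum.cong refl) (simp add: complex_mult_cnj cmod_def power2_eq_square)
  finally show ?thesis .
qed

lemma frob_inner_commute:
  "dim_row Z = dim_row Y \<Longrightarrow> dim_col Z = dim_col Y \<Longrightarrow> frob_inner Z Y = cnj (frob_inner Y Z)"
  unfolding frob_inner_def by (simp add: mult.commute)

lemma frob_inner_zero_left[simp]: "frob_inner (0\<^sub>m a b) Z = 0"
  unfolding frob_inner_def by simp

lemma frob_inner_minus_left:
  "Y \<in> carrier_mat a b \<Longrightarrow> Z \<in> carrier_mat a b \<Longrightarrow>
   frob_inner (Y - Z) W = frob_inner Y W - frob_inner Z W"
  unfolding frob_inner_def by (simp add: sum_subtractf[symmetric] left_diff_distrib)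

lemma frob_inner_minus_right:
  "W \<in> carrier_mat a b \<Longrightarrow> Y \<in> carrier_mat a b \<Longrightarrow> Z \<in> carrier_mat a b \<Longrightarrow>
   frob_inner W (Y - Z) = frob_inner W Y - frob_inner W Z"
  unfolding frob_inner_def by (simp add: sum_subtractf[symmetric] right_diff_distrib)

lemma frob_inner_mult_left:
  assumes P: "P \<in> carrier_mat k a" and Z: "Z \<in> carrier_mat a b" and Y: "Y \<in> carrier_mat k b"
  shows "frob_inner Y (P * Z) = frob_inner (mat_adjoint P * Y) Z"
proof -
  have "frob_inner Y (P * Z)
      = (\<Sum>i<k. \<Sum>j<b. \<Sum>l<a. Y $$ (i, j) * cnj (P $$ (i, l)) * cnj (Z $$ (l, j)))"
    unfolding frob_inner_def using Y
    by (intro sum.cong refl)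
      (auto simp: index_mult_mat_sum[OF P Z] sum_distrib_left mult.assoc simp del: index_mult_mat(1))
  also have "\<dots> = (\<Sum>i<k. \<Sum>l<a. \<Sum>j<b. Y $$ (i, j) * cnj (P $$ (i, l)) * cnj (Z $$ (l, j)))"
    by (intro sum.cong refl sum.swap)
  also have "\<dots> = (\<Sum>l<a. \<Sum>i<k. \<Sum>j<b. Y $$ (i, j) * cnj (P $$ (i, l)) * cnj (Z $$ (l, j)))"
    by (rule sum.swap)
  also have "\<dots> = (\<Sum>l<a. \<Sum>j<b. \<Sum>i<k. Y $$ (i, j) * cnj (P $$ (i, l)) * cnj (Z $$ (l, j)))"
    by (intro sum.cong refl sum.swap)
  also have "\<dots> = frob_inner (mat_adjoint P * Y) Z"
    unfolding frob_inner_def using P Y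
    by (intro sum.cong refl)
      (auto simp: index_mult_mat_sum[of "mat_adjoint P" a k Y b] sum_distrib_left mult_ac
        simp del: index_mult_mat(1))
  finally show ?thesis .
qed

lemma frob_inner_mult_right:
  assumes Y: "Y \<in> carrier_mat a k" and Q: "Q \<in> carrier_mat k b" and Z: "Z \<in> carrier_mat a b"
  shows "frob_inner (Y * Q) Z = frob_inner Y (Z * mat_adjoint Q)"
proof -
  have "frob_inner (Y * Q) Z = (\<Sum>i<a. \<Sum>j<b. \<Sum>l<k. Y $$ (i, l) * Q $$ (l, j) * cnj (Z $$ (i, j)))"
    unfolding frob_inner_def using Y Q
    by (intro sum.cong refl)
      (auto simp: index_mult_mat_sum[OF Y Q] sum_distrib_right simp del: index_mult_mat(1))
  also have "\<dots> = (\<Sum>i<a. \<Sum>l<k. \<Sum>j<b. Y $$ (i, l) * Q $$ (l, j) * cnj (Z $$ (i, j)))"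
    by (intro sum.cong refl sum.swap)
  also have "\<dots> = frob_inner Y (Z * mat_adjoint Q)"
    unfolding frob_inner_def using Y Q Z
    by (intro sum.cong refl)
      (auto simp: index_mult_mat_sum[of Z a b "mat_adjoint Q" k] sum_distrib_left mult_ac
        simp del: index_mult_mat(1))
  finally show ?thesis .
qed

lemma frob_norm_sq_minus_orthogonal:
  assumes X: "X \<in> carrier_mat a b" and Y: "Y \<in> carrier_mat a b" and orth: "frob_inner X Y = 0"
  shows "(frob_norm (X - Y))\<^sup>2 = (frob_norm X)\<^sup>2 + (frob_norm Y)\<^sup>2"
proof -
  have "frob_inner Y X = 0"
    using frob_inner_commute[of Y X] orth X Y by simp
  then show ?thesis
    using X Y orth by (simp add: frob_norm_sq frob_inner_minus_left frob_inner_minus_right)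
qed

lemma frob_norm_sq_minus_minus_orthogonal:
  assumes X: "X \<in> carrier_mat a b" and Y: "Y \<in> carrier_mat a b" and T: "T \<in> carrier_mat a b"
    and "frob_inner X Y = 0" "frob_inner X T = 0" "frob_inner Y T = 0"
  shows "(frob_norm (X - Y - T))\<^sup>2 = (frob_norm X)\<^sup>2 + (frob_norm Y)\<^sup>2 + (frob_norm T)\<^sup>2"
proof -
  have "frob_inner (X - Y) T = 0"
    using assms by (simp add: frob_inner_minus_left[OF X Y])
  then show ?thesis
    using frob_norm_sq_minus_orthogonal[OF minus_carrier_mat[OF Y] T]
      frob_norm_sq_minus_orthogonal[OF X Y] assms by simp
qed

lemma frob_norm_nonneg: "0 \<le> frob_norm M"
  unfolding frob_norm_def by (simp add: sum_nonneg)

lemma frob_norm_uminus[simp]: "frob_norm (- M) = frob_norm M"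
  unfolding frob_norm_def by simp

lemma frob_norm_adjoint[simp]: "frob_norm (mat_adjoint M) = frob_norm M"
  unfolding frob_norm_def by (simp add: sum.swap[of _ "{..<dim_col M}"])

lemma frob_norm_isometry:
  assumes P: "P \<in> carrier_mat a k" "mat_adjoint P * P = 1\<^sub>m k"
    and Q: "Q \<in> carrier_mat b l" "mat_adjoint Q * Q = 1\<^sub>m l"
    and M: "M \<in> carrier_mat k l"
  shows "frob_norm (P * M * mat_adjoint Q) = frob_norm M"
proof (rule power2_eq_imp_eq)
  have MQ: "M * mat_adjoint Q \<in> carrier_mat k b"
    using M Q by simp
  have "frob_inner (P * (M * mat_adjoint Q)) (P * (M * mat_adjoint Q))
      = frob_inner (mat_adjoint P * (P * (M * mat_adjoint Q))) (M * mat_adjoint Q)"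
    using P MQ by (intro frob_inner_mult_left) auto
  also have "mat_adjoint P * (P * (M * mat_adjoint Q)) = M * mat_adjoint Q"
    using P MQ by (intro mult_mat_left_inverse_cancel) auto
  also have "frob_inner (M * mat_adjoint Q) (M * mat_adjoint Q)
      = frob_inner M (M * mat_adjoint Q * Q)"
    using frob_inner_mult_right[OF M _ MQ, of "mat_adjoint Q"] Q by simp
  also have "M * mat_adjoint Q * Q = M"
    using M Q by (simp add: mult_mat_assoc)
  finally show "(frob_norm (P * M * mat_adjoint Q))\<^sup>2 = (frob_norm M)\<^sup>2"
    using P M Q by (simp add: frob_norm_sq mult_mat_assoc)
qed (simp_all add: frob_norm_nonneg)

lemma frob_norm_minus_commute:
  "X \<in> carrier_mat a b \<Longrightarrow> Y \<in> carrier_mat a b \<Longrightarrow> frob_norm (X - Y) = frob_norm (Y - X)"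
proof -
  assume "X \<in> carrier_mat a b" "Y \<in> carrier_mat a b"
  then have "X - Y = - (Y - X)"
    by (intro eq_matI) auto
  then show ?thesis
    by simp
qed

lemma frob_norm_mult_minus_commute:
  assumes "A \<in> carrier_mat m n" "B \<in> carrier_mat m n" "X \<in> carrier_mat k m" "Y \<in> carrier_mat n l"
  shows "frob_norm (X * (A - B) * Y) = frob_norm (X * (B - A) * Y)"
proof -
  have "A - B = - (B - A)"
    using assms by (intro eq_matI) auto
  then show ?thesis
    using assms by simp
qed

lemma frob_norm_mult_hermitian_adjoint:
  assumes D: "D \<in> carrier_mat k k" "mat_adjoint D = D"
    and P: "P \<in> carrier_mat a k" and Q: "Q \<in> carrier_mat a l"
  shows "frob_norm (D * mat_adjoint P * Q) = frob_norm (mat_adjoint Q * P * D)"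
proof -
  have "mat_adjoint (D * mat_adjoint P * Q) = mat_adjoint Q * mat_adjoint (D * mat_adjoint P)"
    using D P Q by (intro mat_adjoint_mult) auto
  also have "mat_adjoint (D * mat_adjoint P) = P * D"
    using D P mat_adjoint_mult[of D k k "mat_adjoint P" a] by simp
  finally have "mat_adjoint (D * mat_adjoint P * Q) = mat_adjoint Q * P * D"
    using D P Q by (simp add: mult_mat_assoc)
  then show ?thesis
    using frob_norm_adjoint[of "D * mat_adjoint P * Q"] by simp
qed

section \<open>Penrose equations\<close>

definition is_mp_inverse :: "complex mat \<Rightarrow> complex mat \<Rightarrow> bool" where
  "is_mp_inverse A X \<longleftrightarrow> X \<in> carrier_mat (dim_col A) (dim_row A) \<and>
      A * X * A = A \<and> X * A * X = X \<and>
      mat_adjoint (A * X) = A * X \<and> mat_adjoint (X * A) = X * A"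

lemma is_mp_inverse_unique:
  assumes A: "A \<in> carrier_mat m n" and X: "is_mp_inverse A X" and Y: "is_mp_inverse A Y"
  shows "X = Y"
proof -
  have Xc: "X \<in> carrier_mat n m" and X1: "A * X * A = A"
    and X3: "mat_adjoint (A * X) = A * X" and X4: "mat_adjoint (X * A) = X * A"
    using X A unfolding is_mp_inverse_def by auto
  have Yc: "Y \<in> carrier_mat n m" and Y1: "A * Y * A = A" and Y2: "Y * A * Y = Y"
    and Y3: "mat_adjoint (A * Y) = A * Y" and Y4: "mat_adjoint (Y * A) = Y * A"
    using Y A unfolding is_mp_inverse_def by auto
  have "A * X = mat_adjoint X * mat_adjoint A"
    using X3 mat_adjoint_mult[OF A Xc] by simp
  also have "mat_adjoint A = mat_adjoint (A * Y * A)"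
    using Y1 by simp
  also have "\<dots> = mat_adjoint A * mat_adjoint (A * Y)"
    by (rule mat_adjoint_mult) (use A Yc in auto)
  also have "mat_adjoint X * (mat_adjoint A * mat_adjoint (A * Y)) = mat_adjoint (A * X) * (A * Y)"
    using A Xc Yc Y3 by (simp add: mat_adjoint_mult[OF A Xc] mult_mat_assoc)
  also have "\<dots> = A * X * A * Y"
    using A Xc Yc X3 by (simp add: mult_mat_assoc)
  finally have AX: "A * X = A * Y"
    using X1 by simp
  have "X * A = mat_adjoint A * mat_adjoint X"
    using X4 mat_adjoint_mult[OF Xc A] by simp
  also have "mat_adjoint A = mat_adjoint (A * (Y * A))"
    using Y1 A Yc by (simp add: mult_mat_assoc)
  also have "\<dots> = mat_adjoint (Y * A) * mat_adjoint A"
    by (rule mat_adjoint_mult) (use A Yc in auto)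
  also have "mat_adjoint (Y * A) * mat_adjoint A * mat_adjoint X = Y * (A * X * A)"
    using A Xc Yc X4 Y4 by (simp add: mat_adjoint_mult[OF Xc A, symmetric] mult_mat_assoc)
  finally have XA: "X * A = Y * A"
    using X1 by simp
  have "X = X * A * X"
    using X unfolding is_mp_inverse_def by simp
  also have "\<dots> = Y * (A * Y)"
    using A Xc Yc XA AX by (simp add: mult_mat_assoc)
  also have "\<dots> = Y"
    using A Yc Y2 by (simp add: mult_mat_assoc)
  finally show ?thesis .
qed

lemma mp_inverse_eqI:
  assumes "is_mp_inverse A X"
  shows "mp_inverse A = X"
  unfolding mp_inverse_def
proof (rule the_equality)
  show "X \<in> carrier_mat (dim_col A) (dim_row A) \<and> A * X * A = A \<and> X * A * X = X \<and>
      mat_adjoint (A * X) = A * X \<and> mat_adjoint (X * A) = X * A"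
    using assms unfolding is_mp_inverse_def .
next
  fix Y assume "Y \<in> carrier_mat (dim_col A) (dim_row A) \<and> A * Y * A = A \<and> Y * A * Y = Y \<and>
      mat_adjoint (A * Y) = A * Y \<and> mat_adjoint (Y * A) = Y * A"
  then have "is_mp_inverse A Y"
    unfolding is_mp_inverse_def .
  then show "Y = X"
    using is_mp_inverse_unique[OF carrier_mat_triv _ assms] by simp
qed

lemma is_mp_inverse_residual_projections:
  assumes A: "A \<in> carrier_mat m n" and X: "is_mp_inverse A X"
  shows "mat_adjoint (1\<^sub>m m - A * X) = 1\<^sub>m m - A * X"
    and "mat_adjoint (1\<^sub>m n - X * A) = 1\<^sub>m n - X * A"
    and "X * (1\<^sub>m m - A * X) = 0\<^sub>m n m"
    and "(1\<^sub>m n - X * A) * X = 0\<^sub>m n m"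
proof -
  have Xc: "X \<in> carrier_mat n m" and X2: "X * A * X = X"
    and X3: "mat_adjoint (A * X) = A * X" and X4: "mat_adjoint (X * A) = X * A"
    using X A unfolding is_mp_inverse_def by auto
  show "mat_adjoint (1\<^sub>m m - A * X) = 1\<^sub>m m - A * X"
    using A Xc X3 by (simp add: mat_adjoint_minus[of _ m m])
  show "mat_adjoint (1\<^sub>m n - X * A) = 1\<^sub>m n - X * A"
    using A Xc X4 by (simp add: mat_adjoint_minus[of _ n n])
  have "X * (1\<^sub>m m - A * X) = X - X * A * X"
    using A Xc by (subst mult_minus_distrib_mat[OF Xc one_carrier_mat]) auto
  then show "X * (1\<^sub>m m - A * X) = 0\<^sub>m n m"
    using Xc X2 by simp
  show "(1\<^sub>m n - X * A) * X = 0\<^sub>m n m"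
    using A Xc X2 by (subst minus_mult_distrib_mat[OF one_carrier_mat _ Xc]) auto
qed

lemma mat_diff_residual_split:
  fixes A B X Y :: "'a :: comm_ring_1 mat"
  assumes A: "A \<in> carrier_mat m n" and B: "B \<in> carrier_mat m n"
    and X: "X \<in> carrier_mat n m" and Y: "Y \<in> carrier_mat n m"
  shows "Y - X = Y * (1\<^sub>m m - A * X) - (1\<^sub>m n - Y * B) * X - Y * (B - A) * X"
proof -
  have "Y * (1\<^sub>m m - A * X) = Y - Y * A * X"
    using A X Y by (subst mult_minus_distrib_mat[OF Y one_carrier_mat]) auto
  moreover have "(1\<^sub>m n - Y * B) * X = X - Y * B * X"
    using B X Y by (subst minus_mult_distrib_mat[OF one_carrier_mat _ X]) auto
  moreover have "Y * (B - A) * X = Y * B * X - Y * A * X"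
    unfolding mult_minus_distrib_mat[OF Y B A] using A B Y
    by (intro minus_mult_distrib_mat[OF _ _ X]) auto
  ultimately show ?thesis
    using A B X Y by (intro eq_matI) auto
qed

lemma frob_norm_sq_mp_inverse_diff:
  assumes A: "A \<in> carrier_mat m n" and B: "B \<in> carrier_mat m n"
    and X: "is_mp_inverse A X" and Y: "is_mp_inverse B Y"
  shows "(frob_norm (Y - X))\<^sup>2 = (frob_norm (Y * (1\<^sub>m m - A * X)))\<^sup>2
     + (frob_norm ((1\<^sub>m n - Y * B) * X))\<^sup>2 + (frob_norm (Y * (B - A) * X))\<^sup>2"
proof -
  have Xc: "X \<in> carrier_mat n m" and Yc: "Y \<in> carrier_mat n m"
    using X Y A B unfolding is_mp_inverse_def by auto
  define Q where "Q = 1\<^sub>m m - A * X"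
  define P where "P = 1\<^sub>m n - Y * B"
  define T where "T = Y * (B - A) * X"
  have Qc: "Q \<in> carrier_mat m m" and Pc: "P \<in> carrier_mat n n" and Tc: "T \<in> carrier_mat n m"
    unfolding Q_def P_def T_def using A B Xc Yc by auto
  note projA = is_mp_inverse_residual_projections[OF A X, folded Q_def]
  note projB = is_mp_inverse_residual_projections[OF B Y, folded P_def]
  have "frob_inner (Y * Q) (P * X) = frob_inner (P * (Y * Q)) X"
    using frob_inner_mult_left[OF Pc Xc, of "Y * Q"] projB(2) Yc Qc by simp
  also have "P * (Y * Q) = 0\<^sub>m n m"
    using projB(4) Pc Yc Qc by (simp flip: mult_mat_assoc)
  finally have orth12: "frob_inner (Y * Q) (P * X) = 0"
    by simp
  have "frob_inner (Y * Q) T = frob_inner Y (T * Q)"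
    using frob_inner_mult_right[OF Yc Qc Tc] projA(1) by simp
  also have "T * Q = 0\<^sub>m n m"
    unfolding T_def using projA(3) A B Xc Yc Qc by (simp add: mult_mat_assoc)
  finally have orth13: "frob_inner (Y * Q) T = 0"
    using Yc unfolding frob_inner_def by simp
  have "frob_inner T (P * X) = frob_inner (P * T) X"
    using frob_inner_mult_left[OF Pc Xc Tc] projB(2) by simp
  also have "P * T = 0\<^sub>m n m"
    unfolding T_def using projB(4) A B Pc Xc Yc by (simp flip: mult_mat_assoc)
  finally have "frob_inner T (P * X) = 0"
    by simp
  then have orth23: "frob_inner (P * X) T = 0"
    using frob_inner_commute[of "P * X" T] Pc Xc Tc by simp
  have "Y - X = Y * Q - P * X - T"
    unfolding Q_def P_def T_def by (rule mat_diff_residual_split[OF A B Xc Yc])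
  with orth12 orth13 orth23 Qc Pc Xc Yc Tc show ?thesis
    unfolding Q_def[symmetric] P_def[symmetric] T_def[symmetric]
    by (simp add: frob_norm_sq_minus_minus_orthogonal[of _ n m])
qed

section \<open>Compact singular value decompositions\<close>

lemma dim_row_col_block[simp]: "dim_row (col_block M k l) = dim_row M"
  by (simp add: col_block_def)

lemma dim_col_col_block[simp]: "dim_col (col_block M k l) = l"
  by (simp add: col_block_def)

lemma index_col_block[simp]: "i < dim_row M \<Longrightarrow> j < l \<Longrightarrow> col_block M k l $$ (i, j) = M $$ (i, k + j)"
  by (simp add: col_block_def)

lemma col_block_carrier: "M \<in> carrier_mat m m' \<Longrightarrow> col_block M k l \<in> carrier_mat m l"
  by auto

lemma col_block_orthonormal:
  assumes U: "U \<in> carrier_mat m m" "unitary_mat U" and kl: "k + l \<le> m"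
  shows "col_block U k l \<in> carrier_mat m l"
    and "mat_adjoint (col_block U k l) * col_block U k l = 1\<^sub>m l"
proof (rule col_block_carrier[OF U(1)], rule eq_matI)
  fix i j assume "i < dim_row (1\<^sub>m l :: complex mat)" "j < dim_col (1\<^sub>m l :: complex mat)"
  then have i: "i < l" and j: "j < l" by auto
  have "(mat_adjoint (col_block U k l) * col_block U k l) $$ (i, j)
      = (mat_adjoint U * U) $$ (k + i, k + j)"
    using U(1) i j kl
    by (simp add: index_mult_mat_sum[of _ l m _ l] index_mult_mat_sum[of _ m m _ m]
        col_block_carrier del: index_mult_mat(1))
  also have "\<dots> = 1\<^sub>m l $$ (i, j)"
    using U i j kl by (simp add: unitary_mat_def)
  finally show "(mat_adjoint (col_block U k l) * col_block U k l) $$ (i, j) = 1\<^sub>m l $$ (i, j)" .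
qed (use U in auto)

lemma col_block_complementary_projections:
  assumes U: "U \<in> carrier_mat m m" "unitary_mat U" and r: "r \<le> m"
  shows "1\<^sub>m m - col_block U 0 r * mat_adjoint (col_block U 0 r)
       = col_block U r (m - r) * mat_adjoint (col_block U r (m - r))"
proof (rule eq_matI)
  fix i j assume "i < dim_row (col_block U r (m - r) * mat_adjoint (col_block U r (m - r)))"
    "j < dim_col (col_block U r (m - r) * mat_adjoint (col_block U r (m - r)))"
  then have i: "i < m" and j: "j < m" using U by auto
  have "1\<^sub>m m $$ (i, j) = (U * mat_adjoint U) $$ (i, j)"
    using U by (simp add: unitary_mat_def)
  also have "\<dots> = (\<Sum>p<m. U $$ (i, p) * cnj (U $$ (j, p)))"
    using U i j by (simp add: index_mult_mat_sum[of U m m "mat_adjoint U" m] del: index_mult_mat(1))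
  also have "\<dots> = (\<Sum>p<r. U $$ (i, p) * cnj (U $$ (j, p)))
      + (\<Sum>p<m - r. U $$ (i, r + p) * cnj (U $$ (j, r + p)))"
    using sum_lessThan_add[where r = r and d = "m - r"] r by simp
  finally show "(1\<^sub>m m - col_block U 0 r * mat_adjoint (col_block U 0 r)) $$ (i, j) =
      (col_block U r (m - r) * mat_adjoint (col_block U r (m - r))) $$ (i, j)"
    using U i j
    by (simp add: index_mult_mat_sum[of _ m r _ m] index_mult_mat_sum[of _ m "m - r" _ m]
        col_block_carrier del: index_mult_mat(1))
qed (use U in auto)

lemma mat_inv_eqI:
  assumes M: "M \<in> carrier_mat k k" and X: "X \<in> carrier_mat k k"
    and MX: "M * X = 1\<^sub>m k" and XM: "X * M = 1\<^sub>m k"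
  shows "mat_inv M = X"
  unfolding mat_inv_def
proof (rule the_equality)
  show "X \<in> carrier_mat (dim_row M) (dim_row M) \<and> M * X = 1\<^sub>m (dim_row M) \<and> X * M = 1\<^sub>m (dim_row M)"
    using M X MX XM by simp
next
  fix Z
  assume "Z \<in> carrier_mat (dim_row M) (dim_row M) \<and> M * Z = 1\<^sub>m (dim_row M) \<and> Z * M = 1\<^sub>m (dim_row M)"
  then have Z: "Z \<in> carrier_mat k k" and MZ: "M * Z = 1\<^sub>m k"
    using M by auto
  show "Z = X"
    using mult_mat_left_inverse_cancel[OF XM, of Z] M X Z MZ by simp
qed

lemma mat_diag_of_real_inverse:
  assumes "\<forall>i<k. d i \<noteq> 0"
  shows "mat_diag k (\<lambda>i. complex_of_real (d i)) * mat_diag k (\<lambda>i. complex_of_real (1 / d i)) = 1\<^sub>m k"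
    and "mat_diag k (\<lambda>i. complex_of_real (1 / d i)) * mat_diag k (\<lambda>i. complex_of_real (d i)) = 1\<^sub>m k"
  unfolding mat_diag_diag using assms by (auto intro!: eq_matI simp: mat_diag_def)

lemma mat_inv_mat_diag_of_real:
  assumes "\<forall>i<k. d i \<noteq> 0"
  shows "mat_inv (mat_diag k (\<lambda>i. complex_of_real (d i)))
    = mat_diag k (\<lambda>i. complex_of_real (1 / d i))"
  using mat_diag_of_real_inverse[OF assms] by (intro mat_inv_eqI) auto

lemma frob_norm_mat_inv_diag_adjoint_swap:
  assumes "\<forall>i<k. d i \<noteq> 0" "P \<in> carrier_mat a k" "Q \<in> carrier_mat a l"
  shows "frob_norm (mat_inv (mat_diag k (\<lambda>i. complex_of_real (d i))) * mat_adjoint P * Q)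
    = frob_norm (mat_adjoint Q * P * mat_inv (mat_diag k (\<lambda>i. complex_of_real (d i))))"
  unfolding mat_inv_mat_diag_of_real[OF assms(1)]
  by (rule frob_norm_mult_hermitian_adjoint[OF mat_diag_dim mat_adjoint_mat_diag_of_real assms(2,3)])

lemma orthonormal_factorization_products:
  assumes P: "P \<in> carrier_mat m r" "mat_adjoint P * P = 1\<^sub>m r"
    and Q: "Q \<in> carrier_mat n r" "mat_adjoint Q * Q = 1\<^sub>m r"
    and S: "S \<in> carrier_mat r r" "T \<in> carrier_mat r r" "S * T = 1\<^sub>m r" "T * S = 1\<^sub>m r"
  shows "P * S * mat_adjoint Q * (Q * T * mat_adjoint P) = P * mat_adjoint P"
    and "Q * T * mat_adjoint P * (P * S * mat_adjoint Q) = Q * mat_adjoint Q"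
  using P Q S
  by (simp_all add: mult_mat_assoc mult_mat_left_inverse_cancel[OF P(2)]
      mult_mat_left_inverse_cancel[OF Q(2)] mult_mat_left_inverse_cancel[OF S(3)]
      mult_mat_left_inverse_cancel[OF S(4)])

lemma is_mp_inverse_orthonormal_factorization:
  assumes P: "P \<in> carrier_mat m r" "mat_adjoint P * P = 1\<^sub>m r"
    and Q: "Q \<in> carrier_mat n r" "mat_adjoint Q * Q = 1\<^sub>m r"
    and S: "S \<in> carrier_mat r r" "T \<in> carrier_mat r r" "S * T = 1\<^sub>m r" "T * S = 1\<^sub>m r"
  shows "is_mp_inverse (P * S * mat_adjoint Q) (Q * T * mat_adjoint P)"
proof -
  note products = orthonormal_factorization_products[OF P Q S]
  have "P * mat_adjoint P * (P * S * mat_adjoint Q) = P * S * mat_adjoint Q"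
    and "Q * mat_adjoint Q * (Q * T * mat_adjoint P) = Q * T * mat_adjoint P"
    using P Q S by (simp_all add: mult_mat_assoc mult_mat_left_inverse_cancel[OF P(2)]
        mult_mat_left_inverse_cancel[OF Q(2)])
  moreover have "mat_adjoint (P * mat_adjoint P) = P * mat_adjoint P"
    and "mat_adjoint (Q * mat_adjoint Q) = Q * mat_adjoint Q"
    using P Q by (simp_all add: mat_adjoint_mult[of _ m r] mat_adjoint_mult[of _ n r])
  ultimately show ?thesis
    unfolding is_mp_inverse_def using P Q S products by auto
qed

lemma mp_inverse_compact_svd:
  fixes \<sigma> :: "nat \<Rightarrow> real"
  assumes U: "U \<in> carrier_mat m m" "unitary_mat U" and V: "V \<in> carrier_mat n n" "unitary_mat V"
    and r: "r \<le> m" "r \<le> n" and \<sigma>: "\<forall>i<r. \<sigma> i \<noteq> 0"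
    and A: "A = col_block U 0 r * mat_diag r (\<lambda>i. complex_of_real (\<sigma> i))
                * mat_adjoint (col_block V 0 r)"
  defines "X \<equiv> col_block V 0 r * mat_inv (mat_diag r (\<lambda>i. complex_of_real (\<sigma> i)))
                * mat_adjoint (col_block U 0 r)"
  shows "is_mp_inverse A X" and "mp_inverse A = X"
    and "1\<^sub>m m - A * X = col_block U r (m - r) * mat_adjoint (col_block U r (m - r))"
    and "1\<^sub>m n - X * A = col_block V r (n - r) * mat_adjoint (col_block V r (n - r))"
proof -
  have U1: "col_block U 0 r \<in> carrier_mat m r"
      "mat_adjoint (col_block U 0 r) * col_block U 0 r = 1\<^sub>m r"
    and V1: "col_block V 0 r \<in> carrier_mat n r"
      "mat_adjoint (col_block V 0 r) * col_block V 0 r = 1\<^sub>m r"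
    using col_block_orthonormal[OF U] col_block_orthonormal[OF V] r by auto
  let ?S = "mat_diag r (\<lambda>i. complex_of_real (\<sigma> i))"
  have S: "?S \<in> carrier_mat r r" "mat_inv ?S \<in> carrier_mat r r"
    "?S * mat_inv ?S = 1\<^sub>m r" "mat_inv ?S * ?S = 1\<^sub>m r"
    using mat_diag_of_real_inverse[OF \<sigma>] by (simp_all add: mat_inv_mat_diag_of_real[OF \<sigma>])
  show "is_mp_inverse A X"
    unfolding A X_def by (rule is_mp_inverse_orthonormal_factorization[OF U1 V1 S])
  then show "mp_inverse A = X"
    by (rule mp_inverse_eqI)
  show "1\<^sub>m m - A * X = col_block U r (m - r) * mat_adjoint (col_block U r (m - r))"
    unfolding A X_def orthonormal_factorization_products[OF U1 V1 S]
    using col_block_complementary_projections[OF U r(1)] .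
  show "1\<^sub>m n - X * A = col_block V r (n - r) * mat_adjoint (col_block V r (n - r))"
    unfolding A X_def orthonormal_factorization_products[OF U1 V1 S]
    using col_block_complementary_projections[OF V r(2)] .
qed

lemma frob_norm_sq_mp_inverse_diff_svd:
  fixes \<sigma> \<sigma>t :: "nat \<Rightarrow> real"
  assumes U: "U \<in> carrier_mat m m" "unitary_mat U" and V: "V \<in> carrier_mat n n" "unitary_mat V"
    and Ut: "Ut \<in> carrier_mat m m" "unitary_mat Ut" and Vt: "Vt \<in> carrier_mat n n" "unitary_mat Vt"
    and r: "r \<le> m" "r \<le> n" and s: "s \<le> m" "s \<le> n"
    and \<sigma>: "\<forall>i<r. \<sigma> i \<noteq> 0" and \<sigma>t: "\<forall>i<s. \<sigma>t i \<noteq> 0"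
    and A: "A = col_block U 0 r * mat_diag r (\<lambda>i. complex_of_real (\<sigma> i))
                * mat_adjoint (col_block V 0 r)"
    and B: "B = col_block Ut 0 s * mat_diag s (\<lambda>i. complex_of_real (\<sigma>t i))
                * mat_adjoint (col_block Vt 0 s)"
  shows "(frob_norm (mp_inverse B - mp_inverse A))\<^sup>2 =
      (frob_norm (mat_inv (mat_diag s (\<lambda>i. complex_of_real (\<sigma>t i))) * mat_adjoint (col_block Ut 0 s)
                  * col_block U r (m - r)))\<^sup>2
    + (frob_norm (mat_adjoint (col_block Vt s (n - s)) * col_block V 0 r
                  * mat_inv (mat_diag r (\<lambda>i. complex_of_real (\<sigma> i)))))\<^sup>2
    + (frob_norm (mp_inverse B * (B - A) * mp_inverse A))\<^sup>2"
proof -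
  define U1 U2 V1 Ut1 Vt1 Vt2 Si Sti where
    "U1 = col_block U 0 r" and "U2 = col_block U r (m - r)" and "V1 = col_block V 0 r"
    and "Ut1 = col_block Ut 0 s" and "Vt1 = col_block Vt 0 s" and "Vt2 = col_block Vt s (n - s)"
    and "Si = mat_inv (mat_diag r (\<lambda>i. complex_of_real (\<sigma> i)))"
    and "Sti = mat_inv (mat_diag s (\<lambda>i. complex_of_real (\<sigma>t i)))"
  note defs = U1_def U2_def V1_def Ut1_def Vt1_def Vt2_def Si_def Sti_def
  note svdA = mp_inverse_compact_svd[OF U V r \<sigma> A, folded defs]
  note svdB = mp_inverse_compact_svd[OF Ut Vt s \<sigma>t B, folded defs]
  have U1: "U1 \<in> carrier_mat m r" "mat_adjoint U1 * U1 = 1\<^sub>m r"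
    and U2: "U2 \<in> carrier_mat m (m - r)" "mat_adjoint U2 * U2 = 1\<^sub>m (m - r)"
    and V1: "V1 \<in> carrier_mat n r" and Ut1: "Ut1 \<in> carrier_mat m s"
    and Vt1: "Vt1 \<in> carrier_mat n s" "mat_adjoint Vt1 * Vt1 = 1\<^sub>m s"
    and Vt2: "Vt2 \<in> carrier_mat n (n - s)" "mat_adjoint Vt2 * Vt2 = 1\<^sub>m (n - s)"
    unfolding defs using col_block_orthonormal[OF U] col_block_orthonormal[OF V]
      col_block_orthonormal[OF Ut] col_block_orthonormal[OF Vt] r s by auto
  have Si: "Si \<in> carrier_mat r r" and Sti: "Sti \<in> carrier_mat s s"
    unfolding Si_def Sti_def by (simp_all add: mat_inv_mat_diag_of_real \<sigma> \<sigma>t)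
  have "frob_norm (Vt1 * Sti * mat_adjoint Ut1 * (U2 * mat_adjoint U2))
      = frob_norm (Vt1 * (Sti * mat_adjoint Ut1 * U2) * mat_adjoint U2)"
    using Vt1 Sti Ut1 U2 by (simp add: mult_mat_assoc)
  also have "\<dots> = frob_norm (Sti * mat_adjoint Ut1 * U2)"
    using Vt1 Sti Ut1 U2 by (intro frob_norm_isometry) auto
  finally have first: "frob_norm (Vt1 * Sti * mat_adjoint Ut1 * (U2 * mat_adjoint U2))
      = frob_norm (Sti * mat_adjoint Ut1 * U2)" .
  have "frob_norm (Vt2 * mat_adjoint Vt2 * (V1 * Si * mat_adjoint U1))
      = frob_norm (Vt2 * (mat_adjoint Vt2 * V1 * Si) * mat_adjoint U1)"
    using Vt2 V1 Si U1 by (simp add: mult_mat_assoc)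
  also have "\<dots> = frob_norm (mat_adjoint Vt2 * V1 * Si)"
    using Vt2 V1 Si U1 by (intro frob_norm_isometry) auto
  finally have second: "frob_norm (Vt2 * mat_adjoint Vt2 * (V1 * Si * mat_adjoint U1))
      = frob_norm (mat_adjoint Vt2 * V1 * Si)" .
  have "A \<in> carrier_mat m n" "B \<in> carrier_mat m n"
    unfolding A B defs[symmetric] using U1 V1 Ut1 Vt1 by auto
  from frob_norm_sq_mp_inverse_diff[OF this svdA(1) svdB(1)] show ?thesis
    unfolding defs[symmetric] svdA(2,3) svdB(2,4) first second .
qed

theorem lemma2p2:
  fixes m n r s :: nat
    and A B U V Ut Vt :: "complex mat"
    and \<sigma> \<sigma>t :: "nat \<Rightarrow> real"
  assumes A: "A \<in> carrier_mat m n" and B: "B \<in> carrier_mat m n"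
    and rkA: "vec_space.rank m A = r"
    and rkB: "vec_space.rank m B = s"
    and r_le: "r \<le> m" "r \<le> n" and s_le: "s \<le> m" "s \<le> n"
    and U: "U \<in> carrier_mat m m" "unitary_mat U"
    and V: "V \<in> carrier_mat n n" "unitary_mat V"
    and Ut: "Ut \<in> carrier_mat m m" "unitary_mat Ut"
    and Vt: "Vt \<in> carrier_mat n n" "unitary_mat Vt"
    and \<sigma>_mono: "\<And>i j. i \<le> j \<Longrightarrow> j < r \<Longrightarrow> \<sigma> j \<le> \<sigma> i"
    and \<sigma>_pos: "\<And>i. i < r \<Longrightarrow> \<sigma> i > 0"
    and \<sigma>t_mono: "\<And>i j. i \<le> j \<Longrightarrow> j < s \<Longrightarrow> \<sigma>t j \<le> \<sigma>t i"
    and \<sigma>t_pos: "\<And>i. i < s \<Longrightarrow> \<sigma>t i > 0"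
    and svdA: "A = U * four_block_mat (mat_diag r (\<lambda>i. complex_of_real (\<sigma> i)))
                      (0\<^sub>m r (n - r)) (0\<^sub>m (m - r) r) (0\<^sub>m (m - r) (n - r)) * mat_adjoint V"
    and svdA1: "A = col_block U 0 r * mat_diag r (\<lambda>i. complex_of_real (\<sigma> i))
                      * mat_adjoint (col_block V 0 r)"
    and svdB: "B = Ut * four_block_mat (mat_diag s (\<lambda>i. complex_of_real (\<sigma>t i)))
                      (0\<^sub>m s (n - s)) (0\<^sub>m (m - s) s) (0\<^sub>m (m - s) (n - s)) * mat_adjoint Vt"
    and svdB1: "B = col_block Ut 0 s * mat_diag s (\<lambda>i. complex_of_real (\<sigma>t i))
                      * mat_adjoint (col_block Vt 0 s)"
  shows
   "let U1 = col_block U 0 r; U2 = col_block U r (m - r);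
        V1 = col_block V 0 r; V2 = col_block V r (n - r);
        Ut1 = col_block Ut 0 s; Ut2 = col_block Ut s (m - s);
        Vt1 = col_block Vt 0 s; Vt2 = col_block Vt s (n - s);
        \<Sigma>1 = mat_diag r (\<lambda>i. complex_of_real (\<sigma> i));
        \<Sigma>t1 = mat_diag s (\<lambda>i. complex_of_real (\<sigma>t i));
        E = B - A
    in (frob_norm (mp_inverse B - mp_inverse A))\<^sup>2 =
         (frob_norm (mat_inv \<Sigma>t1 * mat_adjoint Ut1 * U2))\<^sup>2
       + (frob_norm (mat_adjoint Vt2 * V1 * mat_inv \<Sigma>1))\<^sup>2
       + (frob_norm (mp_inverse B * E * mp_inverse A))\<^sup>2
     \<and> (frob_norm (mp_inverse B - mp_inverse A))\<^sup>2 =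
         (frob_norm (mat_adjoint Ut2 * U1 * mat_inv \<Sigma>1))\<^sup>2
       + (frob_norm (mat_inv \<Sigma>t1 * mat_adjoint Vt1 * V2))\<^sup>2
       + (frob_norm (mp_inverse A * E * mp_inverse B))\<^sup>2"
proof -
  \<comment> \<open>Only the compact SVDs and the positivity of the singular values are used.\<close>
  have \<sigma>: "\<forall>i<r. \<sigma> i \<noteq> 0" and \<sigma>t: "\<forall>i<s. \<sigma>t i \<noteq> 0"
    using \<sigma>_pos \<sigma>t_pos by (metis less_irrefl)+
  have mp_carriers: "mp_inverse A \<in> carrier_mat n m" "mp_inverse B \<in> carrier_mat n m"
    using mp_inverse_compact_svd(1,2)[OF U V r_le \<sigma> svdA1]
      mp_inverse_compact_svd(1,2)[OF Ut Vt s_le \<sigma>t svdB1]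
      A B unfolding is_mp_inverse_def by auto
  let ?Si = "mat_inv (mat_diag r (\<lambda>i. complex_of_real (\<sigma> i)))"
  let ?Sti = "mat_inv (mat_diag s (\<lambda>i. complex_of_real (\<sigma>t i)))"
  have "frob_norm (?Si * mat_adjoint (col_block U 0 r) * col_block Ut s (m - s))
      = frob_norm (mat_adjoint (col_block Ut s (m - s)) * col_block U 0 r * ?Si)"
    using U Ut by (intro frob_norm_mat_inv_diag_adjoint_swap \<sigma>) (auto simp: col_block_carrier)
  moreover have "frob_norm (mat_adjoint (col_block V r (n - r)) * col_block Vt 0 s * ?Sti)
      = frob_norm (?Sti * mat_adjoint (col_block Vt 0 s) * col_block V r (n - r))"
    using V Vt by (intro frob_norm_mat_inv_diag_adjoint_swap[symmetric] \<sigma>t)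
      (auto simp: col_block_carrier)
  ultimately show ?thesis
    using frob_norm_sq_mp_inverse_diff_svd[OF U V Ut Vt r_le s_le \<sigma> \<sigma>t svdA1 svdB1]
      frob_norm_sq_mp_inverse_diff_svd[OF Ut Vt U V s_le r_le \<sigma>t \<sigma> svdB1 svdA1]
      frob_norm_minus_commute[OF mp_carriers] frob_norm_mult_minus_commute[OF A B mp_carriers(1,2)]
    unfolding Let_def by simp
qed

end
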